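(* Let $d\ge1$ and let $T$ be a $d\times d$ column-stochastic matrix. For each row $i$ choose a permutation $\sigma_i$ of $\{1,\dots,d\}$ such that $T_{i\sigma_i(1)}\ge T_{i\sigma_i(2)}\ge\dots\ge T_{i\sigma_i(d)}$, and for $n=1,\dots,d$ define $K_n=\sum_{i=1}^d\sqrt{T_{i\sigma_i(n)}}\,|i\rangle\langle\sigma_i(n)|$. Then $\Phi(\rho)=\sum_{n=1}^dK_n\rho K_n^\dagger$ is a quantum channel whose classical action is $T$, and the nonzero part of the spectrum of its Jamio{\l}kowski state is given by $$\boldsymbol{\lambda}(J_\Phi)=\frac1d\sum_{i=1}^d\mathbf{r}^{(i)},\qquad \mathbf{r}^{(i)}=(T_{i1},\dots,T_{id})^\downarrow,$$ (padded with zeros to length $d^2$). In particular, every $T$ is the classical action of a channel whose Jamio{\l}kowski state has rank at most $d$ (i.e., with at most $d$ Kraus operators).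
   Context: Fix an orthonormal basis $\{|i\rangle\}_{i=1}^d$ of $\mathbb{C}^d$, $|\Omega\rangle=\sum_i|ii\rangle$. The Jamio{\l}kowski state of a channel $\Phi$ is $J_\Phi=\frac1d(\Phi\otimes\mathcal{I})(|\Omega\rangle\langle\Omega|)$. The classical action of $\Phi$ is the matrix $T$ with $T_{ij}=\langle i|\Phi(|j\rangle\langle j|)|i\rangle$. A column-stochastic matrix satisfies $T_{ij}\ge0$ and $\sum_iT_{ij}=1$ for all $j$. $\boldsymbol{\lambda}(X)$ denotes eigenvalues in non-increasing order and $x^\downarrow$ the non-increasing rearrangement of a vector $x$. *)

theory Defs
  imports "Jordan_Normal_Form.Jordan_Normal_Form" "Jordan_Normal_Form.Schur_Decomposition"
    "Jordan_Normal_Form.DL_Rank"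
begin

(* Indices are 0-based: the basis |i>, i = 0..d-1.  Matrices are complex d x d matrices
   (Jordan_Normal_Form 'mat').  A map on d x d matrices is a function complex mat => complex mat;
   only its behaviour on carrier_mat d d matters. *)

definition mtrace :: "complex mat \<Rightarrow> complex" where
  "mtrace A = (\<Sum>i<dim_row A. A $$ (i,i))"

definition psd :: "nat \<Rightarrow> complex mat \<Rightarrow> bool" where
  "psd n A \<longleftrightarrow> A \<in> carrier_mat n n \<and> A = mat_adjoint A \<and>
     (\<forall>v \<in> carrier_vec n. Im (conjugate v \<bullet> (A *\<^sub>v v)) = 0 \<and> Re (conjugate v \<bullet> (A *\<^sub>v v)) \<ge> 0)"

(* (Phi \<otimes> id_k) acting on (C^d \<otimes> C^k); basis |i>|a> has index i*k + a *)
definition ext_id :: "(complex mat \<Rightarrow> complex mat) \<Rightarrow> nat \<Rightarrow> nat \<Rightarrow> complex mat \<Rightarrow> complex mat" where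
  "ext_id \<Phi> d k X = mat (d*k) (d*k) (\<lambda>(r,c).
      \<Phi> (mat d d (\<lambda>(i,j). X $$ (i*k + r mod k, j*k + c mod k))) $$ (r div k, c div k))"

definition is_channel :: "nat \<Rightarrow> (complex mat \<Rightarrow> complex mat) \<Rightarrow> bool" where
  "is_channel d \<Phi> \<longleftrightarrow>
     (\<forall>A \<in> carrier_mat d d. \<Phi> A \<in> carrier_mat d d) \<and>
     (\<forall>A \<in> carrier_mat d d. \<forall>B \<in> carrier_mat d d. \<Phi> (A + B) = \<Phi> A + \<Phi> B) \<and>
     (\<forall>A \<in> carrier_mat d d. \<forall>c. \<Phi> (c \<cdot>\<^sub>m A) = c \<cdot>\<^sub>m \<Phi> A) \<and>
     (\<forall>A \<in> carrier_mat d d. mtrace (\<Phi> A) = mtrace A) \<and>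
     (\<forall>k X. psd (d*k) X \<longrightarrow> psd (d*k) (ext_id \<Phi> d k X))"

definition ketbra :: "nat \<Rightarrow> nat \<Rightarrow> nat \<Rightarrow> complex mat" where
  "ketbra d a b = mat d d (\<lambda>(i,j). if i = a \<and> j = b then 1 else 0)"

(* |Omega><Omega| on C^d \<otimes> C^d, |Omega> = sum_i |ii>, index of |i>|j> is i*d+j *)
definition omega_proj :: "nat \<Rightarrow> complex mat" where
  "omega_proj d = mat (d*d) (d*d) (\<lambda>(r,c). if r div d = r mod d \<and> c div d = c mod d then 1 else 0)"

definition jamiolkowski :: "nat \<Rightarrow> (complex mat \<Rightarrow> complex mat) \<Rightarrow> complex mat" where
  "jamiolkowski d \<Phi> = (1 / of_nat d) \<cdot>\<^sub>m ext_id \<Phi> d d (omega_proj d)"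

definition classical_action :: "nat \<Rightarrow> (complex mat \<Rightarrow> complex mat) \<Rightarrow> nat \<Rightarrow> nat \<Rightarrow> complex" where
  "classical_action d \<Phi> i j = \<Phi> (ketbra d j j) $$ (i, i)"

definition column_stochastic :: "nat \<Rightarrow> (nat \<Rightarrow> nat \<Rightarrow> real) \<Rightarrow> bool" where
  "column_stochastic d T \<longleftrightarrow> (\<forall>i<d. \<forall>j<d. T i j \<ge> 0) \<and> (\<forall>j<d. (\<Sum>i<d. T i j) = 1)"

definition row_desc :: "nat \<Rightarrow> (nat \<Rightarrow> nat \<Rightarrow> real) \<Rightarrow> nat \<Rightarrow> real list" where
  "row_desc d T i = rev (sort (map (T i) [0..<d]))"

definition kraus_op :: "nat \<Rightarrow> (nat \<Rightarrow> nat \<Rightarrow> real) \<Rightarrow> (nat \<Rightarrow> nat \<Rightarrow> nat) \<Rightarrow> nat \<Rightarrow> complex mat" where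
  "kraus_op d T \<sigma> n = mat d d (\<lambda>(i,j). if j = \<sigma> i n then complex_of_real (sqrt (T i (\<sigma> i n))) else 0)"

definition kraus_channel :: "nat \<Rightarrow> (nat \<Rightarrow> complex mat) \<Rightarrow> complex mat \<Rightarrow> complex mat" where
  "kraus_channel d K \<rho> = mat d d (\<lambda>(i,j). \<Sum>n<d. (K n * \<rho> * mat_adjoint (K n)) $$ (i,j))"

end

(* Every Kraus operator K_n has exactly one nonzero entry in each row i, namely sqrt (T i (sigma_i n))
   in column sigma_i n.  Hence the diagonal of Phi(|j><j|) is sum_n T i (sigma_i n) [sigma_i n = j]
   = T i j, the column sums of T give trace preservation, and complete positivity holds as for
   any Kraus form.  The Jamiolkowski state factors as J = (1/d) S S^* where column n of S is the
   vectorisation of K_n; by Sylvester's identity J has the spectrum of the d x d matrix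
   (1/d) S^* S, padded with d^2 - d zeros, and rank at most d.  Since each sigma_i is a
   permutation, different K_n have disjoint supports in every row, so S^* S is diagonal with
   entries sum_i T i (sigma_i n), which is sum_i of the n-th largest entry of row i. *)

theory Submission
  imports Defs
begin

lemma dim_mat_adjoint [simp]:
  "dim_row (mat_adjoint A) = dim_col A" "dim_col (mat_adjoint A) = dim_row A"
  unfolding mat_adjoint_def by auto

lemma mat_adjoint_carrier: "A \<in> carrier_mat n m \<Longrightarrow> mat_adjoint A \<in> carrier_mat m n"
  unfolding carrier_mat_def by simp

lemma index_mat_adjoint [simp]:
  "i < dim_col A \<Longrightarrow> j < dim_row A \<Longrightarrow> mat_adjoint A $$ (i,j) = conjugate (A $$ (j,i))"
  unfolding mat_adjoint_def by (simp add: mat_of_rows_index)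

lemma mat_adjoint_adjoint: "A \<in> carrier_mat n m \<Longrightarrow> mat_adjoint (mat_adjoint A) = A"
  by (rule eq_matI) auto

lemma mat_adjoint_add:
  "A \<in> carrier_mat n m \<Longrightarrow> B \<in> carrier_mat n m \<Longrightarrow> mat_adjoint (A + B) = mat_adjoint A + mat_adjoint B"
  by (rule eq_matI) (auto simp: conjugate_dist_add)

lemma index_mult_mat_sum:
  fixes A B :: "'a::semiring_0 mat"
  assumes "A \<in> carrier_mat n m" "B \<in> carrier_mat m p" "i < n" "j < p"
  shows "(A * B) $$ (i,j) = (\<Sum>k<m. A $$ (i,k) * B $$ (k,j))"
  using assms by (simp add: scalar_prod_def lessThan_atLeast0)

lemma index_mult_mat_vec_sum:
  fixes A :: "'a::semiring_0 mat"
  assumes "A \<in> carrier_mat n m" "v \<in> carrier_vec m" "i < n"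
  shows "(A *\<^sub>v v) $ i = (\<Sum>k<m. A $$ (i,k) * v $ k)"
  using assms by (simp add: scalar_prod_def lessThan_atLeast0)

lemma scalar_prod_sum:
  "u \<in> carrier_vec n \<Longrightarrow> w \<in> carrier_vec n \<Longrightarrow> u \<bullet> w = (\<Sum>i<n. u $ i * w $ i)"
  by (simp add: scalar_prod_def lessThan_atLeast0)

lemma mat_adjoint_mult:
  fixes A B :: "complex mat"
  assumes A: "A \<in> carrier_mat n m" and B: "B \<in> carrier_mat m p"
  shows "mat_adjoint (A * B) = mat_adjoint B * mat_adjoint A"
proof (rule eq_matI)
  fix i j assume "i < dim_row (mat_adjoint B * mat_adjoint A)" "j < dim_col (mat_adjoint B * mat_adjoint A)"
  then have i: "i < p" and j: "j < n" using A B by auto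
  have "mat_adjoint (A * B) $$ (i,j) = cnj (\<Sum>k<m. A $$ (j,k) * B $$ (k,i))"
    using A B i j by (simp add: index_mult_mat_sum[OF A B j i])
  also have "\<dots> = (\<Sum>k<m. mat_adjoint B $$ (i,k) * mat_adjoint A $$ (k,j))"
    unfolding cnj_sum using A B i j by (intro sum.cong) auto
  also have "\<dots> = (mat_adjoint B * mat_adjoint A) $$ (i,j)"
    by (rule index_mult_mat_sum[symmetric, OF mat_adjoint_carrier[OF B] mat_adjoint_carrier[OF A] i j])
  finally show "mat_adjoint (A * B) $$ (i,j) = (mat_adjoint B * mat_adjoint A) $$ (i,j)" .
qed (use A B in auto)

lemma index_mult_mult_adjoint:
  fixes A X B :: "complex mat"
  assumes A: "A \<in> carrier_mat n m" and X: "X \<in> carrier_mat m m" and B: "B \<in> carrier_mat p m"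
    and r: "r < n" and c: "c < p"
  shows "(A * X * mat_adjoint B) $$ (r,c) = (\<Sum>i<m. \<Sum>j<m. A $$ (r,i) * X $$ (i,j) * cnj (B $$ (c,j)))"
proof -
  have "(A * X * mat_adjoint B) $$ (r,c) = (\<Sum>j<m. (A * X) $$ (r,j) * cnj (B $$ (c,j)))"
    using A X B c by (subst index_mult_mat_sum[OF mult_carrier_mat[OF A X] mat_adjoint_carrier[OF B] r c])
      (auto intro!: sum.cong)
  also have "\<dots> = (\<Sum>j<m. \<Sum>i<m. A $$ (r,i) * X $$ (i,j) * cnj (B $$ (c,j)))"
    using A X r by (auto intro!: sum.cong simp: index_mult_mat_sum[OF A X r] sum_distrib_right
        simp del: index_mult_mat)
  also have "\<dots> = (\<Sum>i<m. \<Sum>j<m. A $$ (r,i) * X $$ (i,j) * cnj (B $$ (c,j)))"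
    by (rule sum.swap)
  finally show ?thesis .
qed

lemma sum_delta_mult_delta:
  fixes f :: "nat \<Rightarrow> nat \<Rightarrow> complex"
  assumes "x < m" "y < m"
  shows "(\<Sum>i<m. \<Sum>j<m. (if i = x then \<alpha> else 0) * f i j * cnj (if j = y then \<beta> else 0))
    = \<alpha> * f x y * cnj \<beta>"
  using assms by (simp add: if_distrib[of "\<lambda>x. x * _"] if_distrib[of "\<lambda>x. _ * x"] if_distrib[of cnj]
      cong: if_cong)

lemma cscalar_mult_mat_vec_adjoint:
  fixes W :: "complex mat"
  assumes W: "W \<in> carrier_mat n m" and v: "v \<in> carrier_vec n" and y: "y \<in> carrier_vec m"
  shows "conjugate v \<bullet> (W *\<^sub>v y) = conjugate (mat_adjoint W *\<^sub>v v) \<bullet> y"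
proof -
  have W': "mat_adjoint W \<in> carrier_mat m n" by (rule mat_adjoint_carrier[OF W])
  have "conjugate v \<bullet> (W *\<^sub>v y) = (\<Sum>i<n. cnj (v $ i) * (\<Sum>k<m. W $$ (i,k) * y $ k))"
    using W v y by (subst scalar_prod_sum[of _ n])
      (auto simp: index_mult_mat_vec_sum[OF W y] simp del: index_mult_mat_vec)
  also have "\<dots> = (\<Sum>i<n. \<Sum>k<m. cnj (v $ i) * W $$ (i,k) * y $ k)"
    by (simp add: sum_distrib_left mult.assoc)
  also have "\<dots> = (\<Sum>k<m. \<Sum>i<n. cnj (v $ i) * W $$ (i,k) * y $ k)"
    by (rule sum.swap)
  also have "\<dots> = (\<Sum>k<m. cnj (\<Sum>i<n. mat_adjoint W $$ (k,i) * v $ i) * y $ k)"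
    using W by (auto intro!: sum.cong simp: cnj_sum sum_distrib_left sum_distrib_right ac_simps)
  also have "\<dots> = conjugate (mat_adjoint W *\<^sub>v v) \<bullet> y"
    using W' v y by (subst scalar_prod_sum[of _ m])
      (auto simp: index_mult_mat_vec_sum[OF W' v] simp del: index_mult_mat_vec)
  finally show ?thesis .
qed

lemma psd_zero_mat: "psd n (0\<^sub>m n n)"
proof -
  have "v \<in> carrier_vec n \<Longrightarrow> 0\<^sub>m n n *\<^sub>v v = 0\<^sub>v n" for v :: "complex vec"
    by (rule eq_vecI) (auto simp: scalar_prod_def)
  moreover have "mat_adjoint (0\<^sub>m n n :: complex mat) = 0\<^sub>m n n"
    by (rule eq_matI) auto
  ultimately show ?thesis unfolding psd_def by (auto simp: scalar_prod_def)
qed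

lemma psd_add:
  assumes A: "psd n A" and B: "psd n B"
  shows "psd n (A + B)"
proof -
  have cA: "A \<in> carrier_mat n n" and hA: "A = mat_adjoint A"
    and cB: "B \<in> carrier_mat n n" and hB: "B = mat_adjoint B"
    using A B unfolding psd_def by auto
  have "conjugate v \<bullet> ((A + B) *\<^sub>v v) = conjugate v \<bullet> (A *\<^sub>v v) + conjugate v \<bullet> (B *\<^sub>v v)"
    if "v \<in> carrier_vec n" for v
    using cA cB that by (simp add: add_mult_distrib_mat_vec scalar_prod_add_distrib[of _ n])
  moreover have "A + B = mat_adjoint (A + B)"
    using mat_adjoint_add[OF cA cB] by (simp flip: hA hB)
  ultimately show ?thesis
    using A B cA cB unfolding psd_def by auto
qed

lemma psd_mult_mult_adjoint:
  fixes W X :: "complex mat"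
  assumes X: "psd m X" and W: "W \<in> carrier_mat n m"
  shows "psd n (W * X * mat_adjoint W)"
proof -
  have cX: "X \<in> carrier_mat m m" and hX: "mat_adjoint X = X" using X unfolding psd_def by auto
  have W': "mat_adjoint W \<in> carrier_mat m n" by (rule mat_adjoint_carrier[OF W])
  have "mat_adjoint (W * X * mat_adjoint W) = mat_adjoint (mat_adjoint W) * mat_adjoint (W * X)"
    by (rule mat_adjoint_mult[OF mult_carrier_mat[OF W cX] W'])
  also have "\<dots> = W * (mat_adjoint X * mat_adjoint W)"
    by (simp only: mat_adjoint_adjoint[OF W] mat_adjoint_mult[OF W cX])
  also have "\<dots> = W * X * mat_adjoint W"
    using W cX W' hX by (simp add: assoc_mult_mat[of _ n m _ m _ n])
  finally have herm: "mat_adjoint (W * X * mat_adjoint W) = W * X * mat_adjoint W" .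
  have quad: "conjugate v \<bullet> ((W * X * mat_adjoint W) *\<^sub>v v) = conjugate u \<bullet> (X *\<^sub>v u)"
    if v: "v \<in> carrier_vec n" and u: "u = mat_adjoint W *\<^sub>v v" for v u
  proof -
    have "(W * X * mat_adjoint W) *\<^sub>v v = W *\<^sub>v (X *\<^sub>v u)"
      using W cX W' v u by (simp add: assoc_mult_mat_vec[of _ n m _ n] assoc_mult_mat_vec[of _ m m _ n])
    then show ?thesis
      using cscalar_mult_mat_vec_adjoint[OF W v, of "X *\<^sub>v u"] cX W' v u by auto
  qed
  show ?thesis
    unfolding psd_def
  proof (intro conjI ballI)
    fix v :: "complex vec" assume v: "v \<in> carrier_vec n"
    have "mat_adjoint W *\<^sub>v v \<in> carrier_vec m" using W' v by auto
    then show "Im (conjugate v \<bullet> (W * X * mat_adjoint W *\<^sub>v v)) = 0"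
      "0 \<le> Re (conjugate v \<bullet> (W * X * mat_adjoint W *\<^sub>v v))"
      using quad[OF v refl] X unfolding psd_def by auto
  qed (use W cX W' herm in auto)
qed

definition mat_sum :: "nat \<Rightarrow> nat \<Rightarrow> (nat \<Rightarrow> 'a::comm_monoid_add mat) \<Rightarrow> nat \<Rightarrow> 'a mat" where
  "mat_sum nr nc F m = mat nr nc (\<lambda>(r,c). \<Sum>n<m. F n $$ (r,c))"

lemma mat_sum_0: "mat_sum nr nc F 0 = 0\<^sub>m nr nc"
  unfolding mat_sum_def by (rule eq_matI) auto

lemma mat_sum_Suc:
  "F m \<in> carrier_mat nr nc \<Longrightarrow> mat_sum nr nc F (Suc m) = mat_sum nr nc F m + F m"
  unfolding mat_sum_def by (rule eq_matI) auto

lemma mat_sum_carrier: "mat_sum nr nc F m \<in> carrier_mat nr nc"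
  unfolding mat_sum_def by simp

lemma psd_mat_sum:
  assumes "\<And>n. n < m \<Longrightarrow> psd N (F n)"
  shows "psd N (mat_sum N N F m)"
  using assms
proof (induction m)
  case 0
  then show ?case by (simp add: mat_sum_0 psd_zero_mat)
next
  case (Suc m)
  then have "F m \<in> carrier_mat N N" unfolding psd_def by simp
  with Suc show ?case by (simp add: mat_sum_Suc psd_add)
qed

lemma rank_mat_sum_le:
  fixes F :: "nat \<Rightarrow> 'a::field mat"
  assumes "\<And>n. n < m \<Longrightarrow> F n \<in> carrier_mat nr nc"
    and "\<And>n. n < m \<Longrightarrow> vec_space.rank nr (F n) \<le> 1"
  shows "vec_space.rank nr (mat_sum nr nc F m) \<le> m"
  using assms
proof (induction m)
  case 0
  then show ?case by (simp add: mat_sum_0 vec_space.rank_0I)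
next
  case (Suc m)
  have "vec_space.rank nr (mat_sum nr nc F (Suc m)) = vec_space.rank nr (mat_sum nr nc F m + F m)"
    using Suc.prems by (simp add: mat_sum_Suc)
  also have "\<dots> \<le> vec_space.rank nr (mat_sum nr nc F m) + vec_space.rank nr (F m)"
    by (rule vec_space.rank_subadditive[OF mat_sum_carrier]) (simp add: Suc.prems)
  also have "\<dots> \<le> m + 1" using Suc by (intro add_mono) auto
  finally show ?case by simp
qed

text \<open>A product through an inner dimension \<open>m\<close> is a sum of \<open>m\<close> outer products.\<close>

lemma rank_mult_le_inner_dim:
  fixes A B :: "'a::field mat"
  assumes A: "A \<in> carrier_mat n m" and B: "B \<in> carrier_mat m p"
  shows "vec_space.rank n (A * B) \<le> m"
proof -
  define R where "R k = mat n p (\<lambda>(i,j). A $$ (i,k) * B $$ (k,j))" for k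
  have "A * B = mat_sum n p R m"
    by (rule eq_matI) (use A B in \<open>auto simp: mat_sum_def R_def index_mult_mat_sum[OF A B]
        index_mult_mat(2,3) simp del: index_mult_mat(1)\<close>)
  also have "vec_space.rank n (mat_sum n p R m) \<le> m"
  proof (rule rank_mat_sum_le)
    fix k
    show "R k \<in> carrier_mat n p" unfolding R_def by simp
    show "vec_space.rank n (R k) \<le> 1"
      by (rule vec_space.rank_le_1_product_entries[where f = "\<lambda>i. A $$ (i,k)" and g = "\<lambda>j. B $$ (k,j)"])
        (auto simp: R_def)
  qed
  finally show ?thesis .
qed

lemma sum_lessThan_mult_split:
  fixes f :: "nat \<Rightarrow> 'a::comm_monoid_add"
  shows "(\<Sum>r<d*k. f r) = (\<Sum>a<d. \<Sum>p<k. f (a*k + p))"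
proof -
  have "(\<Sum>r<d*k. f r) = (\<Sum>a<d. \<Sum>r\<in>{a*k..<a*k + k}. f r)"
    by (rule sum.nat_group[symmetric])
  also have "\<dots> = (\<Sum>a<d. \<Sum>p<k. f (a*k + p))"
    using sum.shift_bounds_nat_ivl[of f 0 "a*k" k for a]
    by (simp add: atLeast0LessThan add.commute)
  finally show ?thesis .
qed

text \<open>Sylvester's identity \<open>x\<^sup>n \<chi>\<^sub>A\<^sub>B = x\<^sup>m \<chi>\<^sub>B\<^sub>A\<close>, from the two block factorisations of
  \<open>[[x I, A], [B, I]]\<close>.\<close>

lemma char_poly_mult_commute:
  fixes A B :: "'a::idom mat"
  assumes A: "A \<in> carrier_mat m n" and B: "B \<in> carrier_mat n m"
  shows "monom 1 n * char_poly (A * B) = monom 1 m * char_poly (B * A)"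
proof -
  define L :: "'a mat \<Rightarrow> 'a poly mat" where "L = map_mat (\<lambda>a. [:a:])"
  define X :: "'a poly" where "X = [:0,1:]"
  let ?PA = "L A" and ?PB = "L B"
  have PA: "?PA \<in> carrier_mat m n" and PB: "?PB \<in> carrier_mat n m" using A B by (auto simp: L_def)
  have mPA: "- ?PA \<in> carrier_mat m n" and mPB: "- ?PB \<in> carrier_mat n m" using PA PB by auto
  have XIm: "X \<cdot>\<^sub>m 1\<^sub>m m \<in> carrier_mat m m" and XIn: "X \<cdot>\<^sub>m 1\<^sub>m n \<in> carrier_mat n n" by auto
  have char_poly_matrix_mult: "char_poly_matrix (C * D) = X \<cdot>\<^sub>m 1\<^sub>m k + - (L C * L D)"
    if C: "C \<in> carrier_mat k l" and D: "D \<in> carrier_mat l k" for C D :: "'a mat" and k l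
  proof -
    have "map_mat (\<lambda>a. [: - a :]) (C * D) = - (L C * L D)"
      unfolding L_def map_poly_mult(1)[OF C D, symmetric] by (rule eq_matI) auto
    then show ?thesis unfolding char_poly_matrix_def X_def using C D by simp
  qed
  define M where "M = four_block_mat (X \<cdot>\<^sub>m 1\<^sub>m m) ?PA ?PB (1\<^sub>m n)"
  define L1 where "L1 = four_block_mat (1\<^sub>m m) (- ?PA) (0\<^sub>m n m) (1\<^sub>m n)"
  define L2 where "L2 = four_block_mat (1\<^sub>m m) (0\<^sub>m m n) (- ?PB) (X \<cdot>\<^sub>m 1\<^sub>m n)"
  have cM: "M \<in> carrier_mat (m+n) (m+n)" unfolding M_def by auto
  have cL1: "L1 \<in> carrier_mat (m+n) (m+n)" unfolding L1_def by auto
  have cL2: "L2 \<in> carrier_mat (m+n) (m+n)" unfolding L2_def by auto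
  have dL1: "det L1 = 1" unfolding L1_def
    by (subst det_four_block_mat_lower_left_zero[of _ m _ n]) (use PA in auto)
  have dL2: "det L2 = X ^ n" unfolding L2_def
    by (subst det_four_block_mat_upper_right_zero[of _ m _ n]) (use PB in auto)
  have L1M: "L1 * M = four_block_mat (char_poly_matrix (A * B)) (0\<^sub>m m n) ?PB (1\<^sub>m n)"
    unfolding L1_def M_def char_poly_matrix_mult[OF A B]
    by (subst mult_four_block_mat[OF one_carrier_mat mPA zero_carrier_mat one_carrier_mat XIm PA PB
          one_carrier_mat], rule cong_four_block_mat) (use PA PB in \<open>auto intro!: eq_matI\<close>)
  have L2M: "L2 * M = four_block_mat (X \<cdot>\<^sub>m 1\<^sub>m m) ?PA (0\<^sub>m n m) (char_poly_matrix (B * A))"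
    unfolding L2_def M_def char_poly_matrix_mult[OF B A]
    by (subst mult_four_block_mat[OF one_carrier_mat zero_carrier_mat mPB XIn XIm PA PB
          one_carrier_mat], rule cong_four_block_mat)
      (use PA PB in \<open>auto intro!: eq_matI simp: mult_smult_distrib[OF PB] mult_smult_assoc_mat[OF _ PB]\<close>)
  have "det (L1 * M) = char_poly (A * B)" unfolding L1M char_poly_def
    using A B PB by (subst det_four_block_mat_upper_right_zero[of _ m _ n]) auto
  then have dM: "det M = char_poly (A * B)" using det_mult[OF cL1 cM] dL1 by simp
  have "det (L2 * M) = X ^ m * char_poly (B * A)" unfolding L2M char_poly_def
    using A B PA by (subst det_four_block_mat_lower_left_zero[of _ m _ n]) auto
  then show ?thesis
    using det_mult[OF cL2 cM] dL2 dM by (simp add: monom_altdef X_def)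
qed

lemma nth_rev_sort_map_permutes:
  assumes \<pi>: "\<pi> permutes {..<d}"
    and mono: "\<forall>m<d. \<forall>n<d. m \<le> n \<longrightarrow> f (\<pi> m) \<ge> f (\<pi> n)"
    and n: "n < d"
  shows "rev (sort (map f [0..<d])) ! n = f (\<pi> n)"
proof -
  define ys where "ys = map (\<lambda>n. f (\<pi> n)) [0..<d]"
  have "mset (map \<pi> [0..<d]) = mset [0..<d]"
  proof -
    have inj: "inj_on \<pi> {0..<d}" using permutes_inj[OF \<pi>] by (auto intro: inj_on_subset)
    have "\<pi> ` {0..<d} = {0..<d}" using permutes_image[OF \<pi>] by (simp add: lessThan_atLeast0)
    then show ?thesis by (simp add: image_mset_mset_set[OF inj])
  qed
  moreover have "mset ys = image_mset f (mset (map \<pi> [0..<d]))"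
    unfolding ys_def by (simp only: mset_map[symmetric] map_map comp_def)
  ultimately have "mset (rev ys) = mset (map f [0..<d])"
    by (simp only: mset_rev mset_map)
  moreover have "sorted (rev ys)"
    unfolding sorted_rev_iff_nth_mono ys_def using mono by auto
  ultimately have "sort (map f [0..<d]) = rev ys" by (rule properties_for_sort)
  then show ?thesis using n by (simp add: ys_def)
qed

lemma mult_add_less_mult: "i < d \<Longrightarrow> p < k \<Longrightarrow> i * k + p < d * (k::nat)"
proof -
  assume "i < d" "p < k"
  then have "i * k + p < Suc i * k" by simp
  also have "\<dots> \<le> d * k" using \<open>i < d\<close> by (intro mult_le_mono1) simp
  finally show ?thesis .
qed

text \<open>\<open>K \<otimes> I\<^sub>k\<close>, with basis index \<open>i * k + p\<close> for \<open>|i\<rangle>|p\<rangle>\<close> as in \<^const>\<open>ext_id\<close>.\<close>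

definition kron_id :: "nat \<Rightarrow> 'a::zero mat \<Rightarrow> 'a mat" where
  "kron_id k K = mat (dim_row K * k) (dim_col K * k)
     (\<lambda>(r,c). if r mod k = c mod k then K $$ (r div k, c div k) else 0)"

lemma kron_id_carrier: "K \<in> carrier_mat n m \<Longrightarrow> kron_id k K \<in> carrier_mat (n * k) (m * k)"
  unfolding kron_id_def by auto

lemma index_kron_id:
  "i < dim_row K \<Longrightarrow> j < dim_col K \<Longrightarrow> p < k \<Longrightarrow> q < k \<Longrightarrow>
    kron_id k K $$ (i*k + p, j*k + q) = (if p = q then K $$ (i,j) else 0)"
  unfolding kron_id_def by (simp add: mult_add_less_mult)

lemma index_kron_id_mult_mult_adjoint:
  fixes K X :: "complex mat"
  assumes K: "K \<in> carrier_mat d d" and X: "X \<in> carrier_mat (d*k) (d*k)"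
    and a: "a < d" and b: "b < d" and p: "p < k" and q: "q < k"
  shows "(kron_id k K * X * mat_adjoint (kron_id k K)) $$ (a*k + p, b*k + q)
    = (\<Sum>i<d. \<Sum>j<d. K $$ (a,i) * X $$ (i*k + p, j*k + q) * cnj (K $$ (b,j)))"
proof -
  have W: "kron_id k K \<in> carrier_mat (d*k) (d*k)" using kron_id_carrier[OF K] .
  have "(kron_id k K * X * mat_adjoint (kron_id k K)) $$ (a*k + p, b*k + q)
    = (\<Sum>i<d. \<Sum>p'<k. \<Sum>j<d. \<Sum>q'<k. kron_id k K $$ (a*k + p, i*k + p') * X $$ (i*k + p', j*k + q')
         * cnj (kron_id k K $$ (b*k + q, j*k + q')))"
    by (simp add: index_mult_mult_adjoint[OF W X W] mult_add_less_mult a b p q sum_lessThan_mult_split)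
  also have "\<dots> = (\<Sum>i<d. \<Sum>j<d. \<Sum>p'<k. \<Sum>q'<k. kron_id k K $$ (a*k + p, i*k + p')
         * X $$ (i*k + p', j*k + q') * cnj (kron_id k K $$ (b*k + q, j*k + q')))"
    by (rule sum.cong[OF refl sum.swap])
  also have "\<dots> = (\<Sum>i<d. \<Sum>j<d. K $$ (a,i) * X $$ (i*k + p, j*k + q) * cnj (K $$ (b,j)))"
    using K a b p q
    by (simp add: index_kron_id if_distrib[of "\<lambda>x. x * _"] if_distrib[of "\<lambda>x. _ * x"]
        if_distrib[of cnj] cong: if_cong)
  finally show ?thesis .
qed

lemma kraus_channel_carrier: "kraus_channel d K \<rho> \<in> carrier_mat d d"
  unfolding kraus_channel_def by simp

lemma dim_kraus_channel [simp]:
  "dim_row (kraus_channel d K \<rho>) = d" "dim_col (kraus_channel d K \<rho>) = d"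
  unfolding kraus_channel_def by simp_all

lemma index_kraus_channel:
  assumes K: "\<And>n. n < d \<Longrightarrow> K n \<in> carrier_mat d d" and \<rho>: "\<rho> \<in> carrier_mat d d"
    and a: "a < d" and b: "b < d"
  shows "kraus_channel d K \<rho> $$ (a,b)
    = (\<Sum>n<d. \<Sum>i<d. \<Sum>j<d. K n $$ (a,i) * \<rho> $$ (i,j) * cnj (K n $$ (b,j)))"
  unfolding kraus_channel_def using a b
  by (auto intro!: sum.cong simp: index_mult_mult_adjoint[OF K \<rho> K])

lemma kraus_channel_add:
  assumes K: "\<And>n. n < d \<Longrightarrow> K n \<in> carrier_mat d d"
    and A: "A \<in> carrier_mat d d" and B: "B \<in> carrier_mat d d"
  shows "kraus_channel d K (A + B) = kraus_channel d K A + kraus_channel d K B"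
  by (rule eq_matI) (use A B in \<open>auto simp: index_kraus_channel[OF K]
      sum.distrib distrib_left distrib_right\<close>)

lemma kraus_channel_smult:
  assumes K: "\<And>n. n < d \<Longrightarrow> K n \<in> carrier_mat d d" and A: "A \<in> carrier_mat d d"
  shows "kraus_channel d K (c \<cdot>\<^sub>m A) = c \<cdot>\<^sub>m kraus_channel d K A"
  by (rule eq_matI) (use A in \<open>auto simp: index_kraus_channel[OF K] sum_distrib_left ac_simps\<close>)

lemma ext_id_kraus_channel:
  assumes K: "\<And>n. n < d \<Longrightarrow> K n \<in> carrier_mat d d" and X: "X \<in> carrier_mat (d*k) (d*k)"
  shows "ext_id (kraus_channel d K) d k X
    = mat_sum (d*k) (d*k) (\<lambda>n. kron_id k (K n) * X * mat_adjoint (kron_id k (K n))) d"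
proof (rule eq_matI)
  fix r c
  assume "r < dim_row (mat_sum (d*k) (d*k) (\<lambda>n. kron_id k (K n) * X * mat_adjoint (kron_id k (K n))) d)"
    and "c < dim_col (mat_sum (d*k) (d*k) (\<lambda>n. kron_id k (K n) * X * mat_adjoint (kron_id k (K n))) d)"
  then have r: "r < d*k" and c: "c < d*k" by (auto simp: mat_sum_def)
  then have k: "0 < k" by (cases k) auto
  define a b p q where "a = r div k" and "b = c div k" and "p = r mod k" and "q = c mod k"
  have ab: "a < d" "b < d" using r c unfolding a_def b_def by (auto simp: less_mult_imp_div_less)
  have pq: "p < k" "q < k" using k unfolding p_def q_def by auto
  have rc: "r = a*k + p" "c = b*k + q" unfolding a_def b_def p_def q_def by simp_all
  define Y where "Y = mat d d (\<lambda>(i,j). X $$ (i*k + p, j*k + q))"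
  have Y: "Y \<in> carrier_mat d d" unfolding Y_def by simp
  have "ext_id (kraus_channel d K) d k X $$ (r,c) = kraus_channel d K Y $$ (a,b)"
    unfolding ext_id_def Y_def a_def b_def p_def q_def using r c by simp
  also have "\<dots> = (\<Sum>n<d. \<Sum>i<d. \<Sum>j<d. K n $$ (a,i) * Y $$ (i,j) * cnj (K n $$ (b,j)))"
    by (rule index_kraus_channel[OF K Y ab])
  also have "\<dots> = (\<Sum>n<d. \<Sum>i<d. \<Sum>j<d. K n $$ (a,i) * X $$ (i*k + p, j*k + q) * cnj (K n $$ (b,j)))"
    by (intro sum.cong refl) (simp add: Y_def)
  also have "\<dots> = (\<Sum>n<d. (kron_id k (K n) * X * mat_adjoint (kron_id k (K n))) $$ (r,c))"
    unfolding rc using ab pq by (simp add: index_kron_id_mult_mult_adjoint[OF K X])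
  also have "\<dots> = mat_sum (d*k) (d*k) (\<lambda>n. kron_id k (K n) * X * mat_adjoint (kron_id k (K n))) d $$ (r,c)"
    unfolding mat_sum_def using r c by simp
  finally show "ext_id (kraus_channel d K) d k X $$ (r,c)
    = mat_sum (d*k) (d*k) (\<lambda>n. kron_id k (K n) * X * mat_adjoint (kron_id k (K n))) d $$ (r,c)" .
qed (auto simp: ext_id_def mat_sum_def)

lemma psd_ext_id_kraus_channel:
  assumes K: "\<And>n. n < d \<Longrightarrow> K n \<in> carrier_mat d d" and X: "psd (d*k) X"
  shows "psd (d*k) (ext_id (kraus_channel d K) d k X)"
proof -
  have "X \<in> carrier_mat (d*k) (d*k)" using X unfolding psd_def by simp
  moreover have "psd (d*k) (mat_sum (d*k) (d*k) (\<lambda>n. kron_id k (K n) * X * mat_adjoint (kron_id k (K n))) d)"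
    by (rule psd_mat_sum, rule psd_mult_mult_adjoint[OF X kron_id_carrier[OF K]])
  ultimately show ?thesis by (simp add: ext_id_kraus_channel[where K = K, OF K])
qed

text \<open>Column \<open>n\<close> of the stack is the vector \<open>(K\<^sub>n \<otimes> I)|\<Omega>\<rangle>\<close>.\<close>

definition kraus_stack :: "nat \<Rightarrow> (nat \<Rightarrow> complex mat) \<Rightarrow> complex mat" where
  "kraus_stack d K = mat (d*d) d (\<lambda>(r,n). K n $$ (r div d, r mod d))"

lemma dim_kraus_stack [simp]: "dim_row (kraus_stack d K) = d*d" "dim_col (kraus_stack d K) = d"
  unfolding kraus_stack_def by simp_all

lemma kraus_stack_carrier: "kraus_stack d K \<in> carrier_mat (d*d) d"
  unfolding carrier_mat_def by simp

lemma index_kraus_stack: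
  "a < d \<Longrightarrow> p < d \<Longrightarrow> n < d \<Longrightarrow> kraus_stack d K $$ (a*d + p, n) = K n $$ (a,p)"
  unfolding kraus_stack_def by (simp add: mult_add_less_mult)

lemma jamiolkowski_kraus_channel:
  assumes K: "\<And>n. n < d \<Longrightarrow> K n \<in> carrier_mat d d"
  shows "jamiolkowski d (kraus_channel d K)
    = (1 / of_nat d) \<cdot>\<^sub>m (kraus_stack d K * mat_adjoint (kraus_stack d K))"
    (is "_ = _ \<cdot>\<^sub>m (?S * mat_adjoint ?S)")
proof (rule eq_matI)
  have S: "?S \<in> carrier_mat (d*d) d" by (rule kraus_stack_carrier)
  fix r c
  assume "r < dim_row ((1 / of_nat d) \<cdot>\<^sub>m (?S * mat_adjoint ?S))"
    and "c < dim_col ((1 / of_nat d) \<cdot>\<^sub>m (?S * mat_adjoint ?S))"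
  then have r: "r < d*d" and c: "c < d*d" using S by auto
  then have "0 < d" by (cases d) auto
  define a b p q where "a = r div d" and "b = c div d" and "p = r mod d" and "q = c mod d"
  have ab: "a < d" "b < d" using r c unfolding a_def b_def by (auto simp: less_mult_imp_div_less)
  have pq: "p < d" "q < d" using \<open>0 < d\<close> unfolding p_def q_def by auto
  have rc: "r = a*d + p" "c = b*d + q" unfolding a_def b_def p_def q_def by simp_all
  define Y where "Y = mat d d (\<lambda>(i,j). omega_proj d $$ (i*d + p, j*d + q))"
  have Y: "Y \<in> carrier_mat d d" unfolding Y_def by simp
  have Yi: "Y $$ (i,j) = (if j = q then if i = p then 1 else 0 else 0)" if "i < d" "j < d" for i j
    unfolding Y_def omega_proj_def using that pq by (simp add: mult_add_less_mult)
  have "jamiolkowski d (kraus_channel d K) $$ (r,c) = (1 / of_nat d) * kraus_channel d K Y $$ (a,b)"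
    unfolding jamiolkowski_def ext_id_def Y_def a_def b_def p_def q_def using r c by simp
  also have "\<dots> = (1 / of_nat d) * (\<Sum>n<d. \<Sum>i<d. \<Sum>j<d. K n $$ (a,i) * Y $$ (i,j) * cnj (K n $$ (b,j)))"
    by (simp add: index_kraus_channel[OF K Y ab])
  also have "\<dots> = (1 / of_nat d) * (\<Sum>n<d. K n $$ (a,p) * cnj (K n $$ (b,q)))"
    using pq by (simp add: Yi if_distrib[of "\<lambda>x. x * _"] if_distrib[of "\<lambda>x. _ * x"] cong: if_cong)
  also have "\<dots> = ((1 / of_nat d) \<cdot>\<^sub>m (?S * mat_adjoint ?S)) $$ (r,c)"
    unfolding rc using ab pq S mult_add_less_mult[OF ab(1) pq(1)] mult_add_less_mult[OF ab(2) pq(2)]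
    by (simp add: index_mult_mat_sum[OF S mat_adjoint_carrier[OF S]] index_kraus_stack
        del: index_mult_mat(1))
  finally show "jamiolkowski d (kraus_channel d K) $$ (r,c)
    = ((1 / of_nat d) \<cdot>\<^sub>m (?S * mat_adjoint ?S)) $$ (r,c)" .
qed (auto simp: jamiolkowski_def ext_id_def kraus_stack_def)

lemma rank_jamiolkowski_kraus_channel:
  assumes "\<And>n. n < d \<Longrightarrow> K n \<in> carrier_mat d d"
  shows "vec_space.rank (d*d) (jamiolkowski d (kraus_channel d K)) \<le> d"
proof -
  have S: "kraus_stack d K \<in> carrier_mat (d*d) d" by (rule kraus_stack_carrier)
  have "jamiolkowski d (kraus_channel d K)
    = ((1 / of_nat d) \<cdot>\<^sub>m kraus_stack d K) * mat_adjoint (kraus_stack d K)"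
    by (simp add: jamiolkowski_kraus_channel[OF assms] mult_smult_assoc_mat[OF S mat_adjoint_carrier[OF S]])
  then show ?thesis
    using rank_mult_le_inner_dim[OF smult_carrier_mat[OF S] mat_adjoint_carrier[OF S]] by simp
qed

lemma char_poly_jamiolkowski_kraus_channel:
  assumes "\<And>n. n < d \<Longrightarrow> K n \<in> carrier_mat d d"
  shows "char_poly (jamiolkowski d (kraus_channel d K))
    = monom 1 (d*d - d) * char_poly ((1 / of_nat d) \<cdot>\<^sub>m (mat_adjoint (kraus_stack d K) * kraus_stack d K))"
    (is "char_poly ?J = _ * char_poly ?G")
proof -
  have S: "kraus_stack d K \<in> carrier_mat (d*d) d" by (rule kraus_stack_carrier)
  have S': "mat_adjoint (kraus_stack d K) \<in> carrier_mat d (d*d)" by (rule mat_adjoint_carrier[OF S])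
  have "?J = ((1 / of_nat d) \<cdot>\<^sub>m kraus_stack d K) * mat_adjoint (kraus_stack d K)"
    by (simp add: jamiolkowski_kraus_channel[OF assms] mult_smult_assoc_mat[OF S S'])
  moreover have "?G = mat_adjoint (kraus_stack d K) * ((1 / of_nat d) \<cdot>\<^sub>m kraus_stack d K)"
    by (simp add: mult_smult_distrib[OF S' S])
  ultimately have "monom 1 d * char_poly ?J = monom 1 (d*d) * char_poly ?G"
    using char_poly_mult_commute[OF smult_carrier_mat[OF S] S'] by simp
  also have "monom 1 (d*d) = monom 1 d * (monom 1 (d*d - d) :: complex poly)"
    by (simp add: mult_monom le_square)
  finally show ?thesis by (simp add: ac_simps)
qed

lemma index_kraus_stack_gram:
  assumes n: "n < d" and m: "m < d"
  shows "(mat_adjoint (kraus_stack d K) * kraus_stack d K) $$ (n,m)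
    = (\<Sum>a<d. \<Sum>p<d. cnj (K n $$ (a,p)) * K m $$ (a,p))"
proof -
  have S: "kraus_stack d K \<in> carrier_mat (d*d) d" by (rule kraus_stack_carrier)
  have "(mat_adjoint (kraus_stack d K) * kraus_stack d K) $$ (n,m)
    = (\<Sum>r<d*d. cnj (kraus_stack d K $$ (r,n)) * kraus_stack d K $$ (r,m))"
    using S n m by (simp add: index_mult_mat_sum[OF mat_adjoint_carrier[OF S] S] del: index_mult_mat)
  also have "\<dots> = (\<Sum>a<d. \<Sum>p<d. cnj (K n $$ (a,p)) * K m $$ (a,p))"
    using n m by (simp add: sum_lessThan_mult_split index_kraus_stack)
  finally show ?thesis .
qed

locale stochastic_kraus =
  fixes d :: nat and T :: "nat \<Rightarrow> nat \<Rightarrow> real" and \<sigma> :: "nat \<Rightarrow> nat \<Rightarrow> nat"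
  assumes column_stochastic: "column_stochastic d T"
    and permutes: "\<And>i. i < d \<Longrightarrow> \<sigma> i permutes {..<d}"
begin

lemma T_nonneg: "i < d \<Longrightarrow> j < d \<Longrightarrow> 0 \<le> T i j"
  using column_stochastic unfolding column_stochastic_def by simp

lemma T_column_sum: "j < d \<Longrightarrow> (\<Sum>i<d. T i j) = 1"
  using column_stochastic unfolding column_stochastic_def by simp

lemma \<sigma>_less: "i < d \<Longrightarrow> n < d \<Longrightarrow> \<sigma> i n < d"
  using permutes_in_image[OF permutes] by simp

lemma \<sigma>_eq_iff: "i < d \<Longrightarrow> \<sigma> i n = \<sigma> i m \<longleftrightarrow> n = m"
  using permutes_inj[OF permutes] by (auto dest: injD)

lemma sum_\<sigma>: "i < d \<Longrightarrow> (\<Sum>n<d. f (\<sigma> i n)) = (\<Sum>j<d. f j)"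
  using sum.permute[OF permutes, of i f] by (simp add: comp_def)

lemma kraus_op_carrier: "kraus_op d T \<sigma> n \<in> carrier_mat d d"
  unfolding kraus_op_def by simp

lemma index_kraus_op:
  "i < d \<Longrightarrow> j < d \<Longrightarrow>
    kraus_op d T \<sigma> n $$ (i,j) = (if j = \<sigma> i n then complex_of_real (sqrt (T i (\<sigma> i n))) else 0)"
  unfolding kraus_op_def by simp

lemma index_kraus_op_channel:
  assumes \<rho>: "\<rho> \<in> carrier_mat d d" and a: "a < d" and b: "b < d"
  shows "kraus_channel d (kraus_op d T \<sigma>) \<rho> $$ (a,b)
    = (\<Sum>n<d. complex_of_real (sqrt (T a (\<sigma> a n)) * sqrt (T b (\<sigma> b n))) * \<rho> $$ (\<sigma> a n, \<sigma> b n))"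
  unfolding index_kraus_channel[OF kraus_op_carrier \<rho> a b]
proof (rule sum.cong[OF refl])
  fix n assume "n \<in> {..<d}"
  then have n: "\<sigma> a n < d" "\<sigma> b n < d" using \<sigma>_less a b by auto
  have "(\<Sum>i<d. \<Sum>j<d. kraus_op d T \<sigma> n $$ (a,i) * \<rho> $$ (i,j) * cnj (kraus_op d T \<sigma> n $$ (b,j)))
    = (\<Sum>i<d. \<Sum>j<d. (if i = \<sigma> a n then complex_of_real (sqrt (T a (\<sigma> a n))) else 0) * \<rho> $$ (i,j)
        * cnj (if j = \<sigma> b n then complex_of_real (sqrt (T b (\<sigma> b n))) else 0))"
    using a b by (intro sum.cong refl) (simp add: index_kraus_op)
  also have "\<dots> = complex_of_real (sqrt (T a (\<sigma> a n)) * sqrt (T b (\<sigma> b n))) * \<rho> $$ (\<sigma> a n, \<sigma> b n)"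
    by (simp add: sum_delta_mult_delta[OF n])
  finally show "(\<Sum>i<d. \<Sum>j<d. kraus_op d T \<sigma> n $$ (a,i) * \<rho> $$ (i,j) * cnj (kraus_op d T \<sigma> n $$ (b,j)))
    = complex_of_real (sqrt (T a (\<sigma> a n)) * sqrt (T b (\<sigma> b n))) * \<rho> $$ (\<sigma> a n, \<sigma> b n)" .
qed

lemma trace_kraus_op_channel:
  assumes A: "A \<in> carrier_mat d d"
  shows "mtrace (kraus_channel d (kraus_op d T \<sigma>) A) = mtrace A"
proof -
  have "mtrace (kraus_channel d (kraus_op d T \<sigma>) A)
    = (\<Sum>a<d. \<Sum>n<d. complex_of_real (T a (\<sigma> a n)) * A $$ (\<sigma> a n, \<sigma> a n))"
    unfolding mtrace_def
    by (auto intro!: sum.cong simp: index_kraus_op_channel[OF A] T_nonneg \<sigma>_less abs_of_nonneg)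
  also have "\<dots> = (\<Sum>a<d. \<Sum>j<d. complex_of_real (T a j) * A $$ (j,j))"
    by (rule sum.cong[OF refl], rule sum_\<sigma>[of _ "\<lambda>j. complex_of_real (T _ j) * A $$ (j,j)"]) simp
  also have "\<dots> = (\<Sum>j<d. \<Sum>a<d. complex_of_real (T a j) * A $$ (j,j))"
    by (rule sum.swap)
  also have "\<dots> = (\<Sum>j<d. complex_of_real (\<Sum>a<d. T a j) * A $$ (j,j))"
    by (simp add: sum_distrib_right)
  also have "\<dots> = mtrace A"
    unfolding mtrace_def using A by (simp add: T_column_sum)
  finally show ?thesis .
qed

lemma classical_action_kraus_op_channel:
  assumes i: "i < d" and j: "j < d"
  shows "classical_action d (kraus_channel d (kraus_op d T \<sigma>)) i j = complex_of_real (T i j)"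
proof -
  have "ketbra d j j \<in> carrier_mat d d" unfolding ketbra_def by simp
  then have "classical_action d (kraus_channel d (kraus_op d T \<sigma>)) i j
    = (\<Sum>n<d. complex_of_real (T i (\<sigma> i n)) * ketbra d j j $$ (\<sigma> i n, \<sigma> i n))"
    unfolding classical_action_def using i
    by (auto intro!: sum.cong simp: index_kraus_op_channel T_nonneg \<sigma>_less abs_of_nonneg)
  also have "\<dots> = (\<Sum>j'<d. complex_of_real (T i j') * ketbra d j j $$ (j',j'))"
    by (rule sum_\<sigma>[OF i])
  also have "\<dots> = complex_of_real (T i j)"
    using j by (simp add: ketbra_def if_distrib[of "\<lambda>x. _ * x"] cong: if_cong)
  finally show ?thesis .
qed

lemma is_channel_kraus_op_channel: "is_channel d (kraus_channel d (kraus_op d T \<sigma>))"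
  unfolding is_channel_def
  by (intro conjI ballI allI impI kraus_channel_carrier kraus_channel_add kraus_channel_smult
      trace_kraus_op_channel psd_ext_id_kraus_channel kraus_op_carrier)

lemma index_kraus_op_gram:
  assumes n: "n < d" and m: "m < d"
  shows "(mat_adjoint (kraus_stack d (kraus_op d T \<sigma>)) * kraus_stack d (kraus_op d T \<sigma>)) $$ (n,m)
    = (if n = m then complex_of_real (\<Sum>a<d. T a (\<sigma> a n)) else 0)"
  unfolding index_kraus_stack_gram[OF n m] using n m
  by (auto intro!: sum.cong simp: index_kraus_op \<sigma>_less \<sigma>_eq_iff T_nonneg
      abs_of_nonneg if_distrib[of "\<lambda>x. x * _"] if_distrib[of "\<lambda>x. _ * x"] if_distrib[of cnj]
      simp flip: of_real_mult cong: if_cong)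

lemma char_poly_jamiolkowski_kraus_op_channel:
  "char_poly (jamiolkowski d (kraus_channel d (kraus_op d T \<sigma>)))
    = (\<Prod>n<d. [: - complex_of_real ((1 / real d) * (\<Sum>a<d. T a (\<sigma> a n))), 1 :]) * monom 1 (d*d - d)"
proof -
  let ?S = "kraus_stack d (kraus_op d T \<sigma>)"
  let ?G = "(1 / of_nat d) \<cdot>\<^sub>m (mat_adjoint ?S * ?S)"
  have G: "?G \<in> carrier_mat d d"
    by (intro smult_carrier_mat mult_carrier_mat[OF mat_adjoint_carrier[OF kraus_stack_carrier]
        kraus_stack_carrier])
  have G_diag: "?G $$ (n,m) = (if n = m then complex_of_real ((1 / real d) * (\<Sum>a<d. T a (\<sigma> a n))) else 0)"
    if "n < d" "m < d" for n m
    using that index_kraus_op_gram[OF that] by (simp del: index_mult_mat(1))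
  then have "upper_triangular ?G"
    using G unfolding upper_triangular_def by auto
  then have "char_poly ?G = (\<Prod>a \<leftarrow> diag_mat ?G. [:- a, 1:])"
    by (rule char_poly_upper_triangular[OF G])
  also have "\<dots> = (\<Prod>n<d. [: - ?G $$ (n,n), 1 :])"
    using G by (simp add: diag_mat_def prod.distinct_set_conv_list[symmetric] atLeast0LessThan
        del: index_smult_mat)
  also have "\<dots> = (\<Prod>n<d. [: - complex_of_real ((1 / real d) * (\<Sum>a<d. T a (\<sigma> a n))), 1 :])"
    by (rule prod.cong[OF refl]) (simp add: G_diag del: index_smult_mat)
  finally show ?thesis
    by (simp add: char_poly_jamiolkowski_kraus_channel[OF kraus_op_carrier] mult.commute)
qed

end

theorem mainTheorem4:
  fixes d :: nat and T :: "nat \<Rightarrow> nat \<Rightarrow> real" and \<sigma> :: "nat \<Rightarrow> nat \<Rightarrow> nat"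
  assumes "d \<ge> 1"
    and "column_stochastic d T"
    and "\<forall>i<d. \<sigma> i permutes {..<d}"
    and "\<forall>i<d. \<forall>m<d. \<forall>n<d. m \<le> n \<longrightarrow> T i (\<sigma> i m) \<ge> T i (\<sigma> i n)"
  shows "is_channel d (kraus_channel d (kraus_op d T \<sigma>))
    \<and> (\<forall>i<d. \<forall>j<d. classical_action d (kraus_channel d (kraus_op d T \<sigma>)) i j = complex_of_real (T i j))
    \<and> char_poly (jamiolkowski d (kraus_channel d (kraus_op d T \<sigma>)))
        = (\<Prod>n<d. [: - complex_of_real ((1 / real d) * (\<Sum>i<d. row_desc d T i ! n)), 1 :])
          * monom 1 (d * d - d)
    \<and> vec_space.rank (d * d) (jamiolkowski d (kraus_channel d (kraus_op d T \<sigma>))) \<le> d"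
proof -
  interpret stochastic_kraus d T \<sigma>
    using assms(2,3) by unfold_locales auto
  have row_desc_sum: "(\<Sum>i<d. row_desc d T i ! n) = (\<Sum>i<d. T i (\<sigma> i n))" if "n < d" for n
    unfolding row_desc_def using assms(3,4) that by (intro sum.cong refl nth_rev_sort_map_permutes) auto
  show ?thesis
    using is_channel_kraus_op_channel classical_action_kraus_op_channel
      char_poly_jamiolkowski_kraus_op_channel rank_jamiolkowski_kraus_channel[OF kraus_op_carrier]
    by (simp add: row_desc_sum)
qed

end
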